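(* Let $(A,C,k)$ be an instance with $n$ voters, let $f:\mathbb{N}\to\mathbb{R}$, let $t$ be a positive integer, and let $W$ be an $f$-representative committee with $\max_{c\in C\setminus W}|N_c| \ge t\frac{n}{k}$. Then the utilitarian ratio of $W$ is at least $\min\left(\frac12, \frac{f(t)}{2k}\right)$.
   Context: An instance $(A,C,k)$ consists of a finite nonempty candidate set $C$, voters $N=\{1,\dots,n\}$, approval sets $A_i\subseteq C$, and a committee size $1\le k\le |C|$. $N_c=\{i\in N: c\in A_i\}$. A committee is a set $W\subseteq C$ with $|W|\le k$. The utilitarian welfare is $\mathrm{sw}(W)=\sum_{i\in N}|A_i\cap W|$, and the utilitarian ratio of $W$ is $\mathrm{sw}(W)/\max\{\mathrm{sw}(W'): W'\subseteq C, |W'|=k\}$. A committee $W$ is $f$-representative if for every $c\in C\setminus W$, every $\ell\in\{1,\dots,k\}$, and every $N'\subseteq N_c$ with $|N'|\ge \ell\frac{n}{k}$, we have $\frac{1}{|N'|}\sum_{i\in N'}|A_i\cap W|\ge f(\ell)$. *)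

theory Defs
  imports Complex_Main
begin

definition is_instance :: "'c set \<Rightarrow> nat \<Rightarrow> (nat \<Rightarrow> 'c set) \<Rightarrow> nat \<Rightarrow> bool" where
  "is_instance C n A k \<longleftrightarrow> finite C \<and> C \<noteq> {} \<and> (\<forall>i\<in>{1..n}. A i \<subseteq> C) \<and> 1 \<le> k \<and> k \<le> card C"

definition supporters :: "nat \<Rightarrow> (nat \<Rightarrow> 'c set) \<Rightarrow> 'c \<Rightarrow> nat set" where
  "supporters n A c = {i \<in> {1..n}. c \<in> A i}"

definition committee :: "'c set \<Rightarrow> nat \<Rightarrow> 'c set \<Rightarrow> bool" where
  "committee C k W \<longleftrightarrow> W \<subseteq> C \<and> card W \<le> k"

definition sw :: "nat \<Rightarrow> (nat \<Rightarrow> 'c set) \<Rightarrow> 'c set \<Rightarrow> nat" where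
  "sw n A W = (\<Sum>i\<in>{1..n}. card (A i \<inter> W))"

definition util_ratio :: "'c set \<Rightarrow> nat \<Rightarrow> (nat \<Rightarrow> 'c set) \<Rightarrow> nat \<Rightarrow> 'c set \<Rightarrow> real" where
  "util_ratio C n A k W =
     real (sw n A W) / real (Max {sw n A W' | W'. W' \<subseteq> C \<and> card W' = k})"

definition f_representative ::
  "(nat \<Rightarrow> real) \<Rightarrow> 'c set \<Rightarrow> nat \<Rightarrow> (nat \<Rightarrow> 'c set) \<Rightarrow> nat \<Rightarrow> 'c set \<Rightarrow> bool" where
  "f_representative f C n A k W \<longleftrightarrow>
     (\<forall>c \<in> C - W. \<forall>l \<in> {1..k}. \<forall>N' \<subseteq> supporters n A c.
        real (card N') \<ge> real l * real n / real k \<longrightarrow>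
        (\<Sum>i\<in>N'. real (card (A i \<inter> W))) / real (card N') \<ge> f l)"

end

theory Submission
  imports Defs
begin

text \<open>Let \<open>c\<close> be an unelected candidate with the most supporters, \<open>m = |N\<^sub>c| \<ge> t n / k\<close>.
  Representativeness applied to \<open>N' = N\<^sub>c\<close> and \<open>\<ell> = t\<close> gives \<open>sw(W) \<ge> f(t) m\<close>. Counting welfare
  candidate by candidate, an optimal committee gains over \<open>W\<close> at most \<open>m\<close> per candidate outside
  \<open>W\<close>, so \<open>OPT \<le> sw(W) + k m\<close>. If \<open>f(t) \<ge> k\<close> this gives \<open>OPT \<le> 2 sw(W)\<close>, and otherwise
  \<open>f(t) OPT \<le> f(t) sw(W) + k sw(W) \<le> 2 k sw(W)\<close>.\<close>

lemma sw_eq_sum_supporters: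
  assumes "finite S"
  shows "sw n A S = (\<Sum>c\<in>S. card (supporters n A c))"
proof -
  have "sw n A S = (\<Sum>i\<in>{1..n}. \<Sum>c\<in>S. of_bool (c \<in> A i))"
    unfolding sw_def using assms by (intro sum.cong refl) (simp add: Int_commute)
  also have "\<dots> = (\<Sum>c\<in>S. \<Sum>i\<in>{1..n}. of_bool (c \<in> A i))"
    by (rule sum.swap)
  also have "\<dots> = (\<Sum>c\<in>S. card (supporters n A c))"
    unfolding supporters_def by (intro sum.cong refl) (simp add: Int_def)
  finally show ?thesis .
qed

lemma card_supporters_le: "card (supporters n A c) \<le> n"
proof -
  have "supporters n A c \<subseteq> {1..n}"
    by (auto simp: supporters_def)
  then show ?thesis
    using card_mono[of "{1..n}"] by fastforce
qed

lemma le_of_card_supporters_ge: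
  assumes "1 \<le> n" "1 \<le> k" "real t * real n / real k \<le> real (card (supporters n A c))"
  shows "t \<le> k"
proof -
  have "real t * real n \<le> real k * real (card (supporters n A c))"
    using assms(2,3) by (simp add: field_simps)
  also have "\<dots> \<le> real k * real n"
    using card_supporters_le[of n A c] by (intro mult_left_mono) simp_all
  finally show ?thesis
    using assms(1) by simp
qed

lemma sw_singleton: "sw n A {c} = card (supporters n A c)"
  by (simp add: sw_eq_sum_supporters)

lemma sw_mono: "finite W' \<Longrightarrow> W \<subseteq> W' \<Longrightarrow> sw n A W \<le> sw n A W'"
  unfolding sw_def by (intro sum_mono card_mono) auto

lemma sw_le_sw_add_card_mult:
  assumes "finite W" "finite W'"
    and "\<And>c. c \<in> W' - W \<Longrightarrow> card (supporters n A c) \<le> m"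
  shows "sw n A W' \<le> sw n A W + card W' * m"
proof -
  have "sw n A W' = (\<Sum>c\<in>W' \<inter> W. card (supporters n A c)) + (\<Sum>c\<in>W' - W. card (supporters n A c))"
    using assms(2) by (simp add: sw_eq_sum_supporters sum.Int_Diff)
  also have "(\<Sum>c\<in>W' \<inter> W. card (supporters n A c)) \<le> sw n A W"
    using assms(1) by (simp add: sw_eq_sum_supporters sum_mono2)
  also have "(\<Sum>c\<in>W' - W. card (supporters n A c)) \<le> card (W' - W) * m"
    using sum_bounded_above[of "W' - W" "\<lambda>c. card (supporters n A c)" m] assms(3) by simp
  also have "card (W' - W) * m \<le> card W' * m"
    using assms(2) by (simp add: card_mono)
  finally show ?thesis by simp
qed

definition max_sw :: "'c set \<Rightarrow> nat \<Rightarrow> (nat \<Rightarrow> 'c set) \<Rightarrow> nat \<Rightarrow> nat" where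
  "max_sw C n A k = Max {sw n A W' | W'. W' \<subseteq> C \<and> card W' = k}"

lemma util_ratio_eq: "util_ratio C n A k W = real (sw n A W) / real (max_sw C n A k)"
  by (simp add: util_ratio_def max_sw_def)

lemma finite_sw_values: "finite C \<Longrightarrow> finite {sw n A W' | W'. W' \<subseteq> C \<and> card W' = k}"
  by (rule finite_subset[of _ "sw n A ` Pow C"]) auto

lemma sw_le_max_sw:
  "finite C \<Longrightarrow> W' \<subseteq> C \<Longrightarrow> card W' = k \<Longrightarrow> sw n A W' \<le> max_sw C n A k"
  unfolding max_sw_def by (rule Max_ge[OF finite_sw_values]) auto

lemma max_sw_attained:
  assumes "finite C" "k \<le> card C"
  obtains W' where "W' \<subseteq> C" "card W' = k" "max_sw C n A k = sw n A W'"
proof -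
  have "{sw n A W' | W'. W' \<subseteq> C \<and> card W' = k} \<noteq> {}"
    using assms(2) by (auto dest: obtain_subset_with_card_n)
  then have "max_sw C n A k \<in> {sw n A W' | W'. W' \<subseteq> C \<and> card W' = k}"
    unfolding max_sw_def using assms(1) by (intro Max_in finite_sw_values)
  then show ?thesis using that by auto
qed

lemma max_sw_le_sw_add:
  assumes "finite C" "W \<subseteq> C" "k \<le> card C"
    and "\<And>c. c \<in> C - W \<Longrightarrow> card (supporters n A c) \<le> m"
  shows "max_sw C n A k \<le> sw n A W + k * m"
proof -
  obtain W' where W': "W' \<subseteq> C" "card W' = k" "max_sw C n A k = sw n A W'"
    using max_sw_attained assms(1,3) by metis
  have "sw n A W' \<le> sw n A W + card W' * m"
    using W'(1) assms by (intro sw_le_sw_add_card_mult) (auto intro: finite_subset)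
  then show ?thesis
    using W'(2,3) by simp
qed

lemma supporters_le_max_sw:
  assumes "finite C" "c \<in> C" "1 \<le> k" "k \<le> card C"
  shows "card (supporters n A c) \<le> max_sw C n A k"
proof -
  have "k - 1 \<le> card (C - {c})"
    using assms by simp
  then obtain B where B: "B \<subseteq> C - {c}" "card B = k - 1"
    by (meson obtain_subset_with_card_n)
  have "finite B"
    using B(1) assms(1) finite_subset by blast
  moreover have "c \<notin> B"
    using B(1) by blast
  ultimately have "card (insert c B) = k"
    using B(2) assms(3) by simp
  moreover have "insert c B \<subseteq> C"
    using B(1) assms(2) by blast
  ultimately have "sw n A (insert c B) \<le> max_sw C n A k"
    using assms(1) by (intro sw_le_max_sw)
  moreover have "sw n A {c} \<le> sw n A (insert c B)"
    using \<open>finite B\<close> by (intro sw_mono) auto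
  ultimately show ?thesis
    by (simp add: sw_singleton)
qed

lemma f_representative_sw_ge:
  assumes "f_representative f C n A k W" "c \<in> C - W" "l \<in> {1..k}"
    and "real (card (supporters n A c)) \<ge> real l * real n / real k"
  shows "f l * real (card (supporters n A c)) \<le> real (sw n A W)"
proof (cases "supporters n A c = {}")
  case False
  have "finite (supporters n A c)"
    by (simp add: supporters_def)
  with False have pos: "real (card (supporters n A c)) > 0"
    by (simp add: card_gt_0_iff)
  have "f l \<le> (\<Sum>i\<in>supporters n A c. real (card (A i \<inter> W))) / real (card (supporters n A c))"
    using assms unfolding f_representative_def by blast
  then have "f l * real (card (supporters n A c)) \<le> (\<Sum>i\<in>supporters n A c. real (card (A i \<inter> W)))"
    using pos by (simp add: pos_le_divide_eq)
  also have "\<dots> \<le> (\<Sum>i\<in>{1..n}. real (card (A i \<inter> W)))"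
    by (rule sum_mono2) (auto simp: supporters_def)
  also have "\<dots> = real (sw n A W)"
    by (simp add: sw_def)
  finally show ?thesis .
qed simp

lemma ratio_ge_min_half:
  fixes s opt F m k :: real
  assumes "0 < m" "0 < k" "0 \<le> s" "0 < opt" "F * m \<le> s" "opt \<le> s + k * m"
  shows "min (1/2) (F / (2 * k)) \<le> s / opt"
proof (cases "k \<le> F")
  case True
  then have "k * m \<le> s"
    using assms(1,5) by (meson mult_right_mono less_imp_le order_trans)
  then have "opt \<le> 2 * s"
    using assms(6) by linarith
  then have "1/2 \<le> s / opt"
    using assms(4) by (simp add: divide_simps)
  then show ?thesis by linarith
next
  case False
  show ?thesis
  proof (cases "F \<le> 0")
    case True
    then have "F / (2 * k) \<le> 0"
      using assms(2) by (simp add: divide_nonpos_pos)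
    moreover have "0 \<le> s / opt"
      using assms(3,4) by simp
    ultimately show ?thesis by linarith
  next
    case F_pos: False
    have "F * opt \<le> F * s + k * (F * m)"
      using mult_left_mono[OF assms(6), of F] F_pos by (simp add: algebra_simps)
    also have "\<dots> \<le> F * s + k * s"
      using assms(2,5) by simp
    also have "\<dots> \<le> 2 * k * s"
      using False assms(3) by (simp add: mult_right_mono)
    finally have "F / (2 * k) \<le> s / opt"
      using assms(2,4) by (simp add: divide_simps mult.commute)
    then show ?thesis by linarith
  qed
qed

theorem lemma1:
  fixes C :: "'c set" and A :: "nat \<Rightarrow> 'c set" and n k t :: nat and f :: "nat \<Rightarrow> real"
    and W :: "'c set"
  assumes "is_instance C n A k"
    and "n \<ge> 1"
    and "t \<ge> 1"
    and "committee C k W"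
    and "f_representative f C n A k W"
    and "C - W \<noteq> {}"
    and "real (Max ((\<lambda>c. card (supporters n A c)) ` (C - W))) \<ge> real t * real n / real k"
  shows "util_ratio C n A k W \<ge> min (1/2) (f t / (2 * real k))"
proof -
  have fin: "finite C" and WC: "W \<subseteq> C" and k: "1 \<le> k" "k \<le> card C"
    using assms(1,4) by (auto simp: is_instance_def committee_def)
  define m where "m = Max ((\<lambda>c. card (supporters n A c)) ` (C - W))"
  have m_max: "card (supporters n A c') \<le> m" if "c' \<in> C - W" for c'
    unfolding m_def using fin that by (intro Max_ge) auto
  have "m \<in> (\<lambda>c. card (supporters n A c)) ` (C - W)"
    unfolding m_def using fin assms(6) by (intro Max_in) auto
  then obtain c where c: "c \<in> C - W" "card (supporters n A c) = m"
    by auto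
  have m_ge: "real t * real n / real k \<le> real m"
    using assms(7) by (simp add: m_def)
  then have "t \<in> {1..k}"
    using le_of_card_supporters_ge[of n k t A c] assms(2,3) k(1) c(2) by simp
  then have sw_W: "f t * real m \<le> real (sw n A W)"
    using f_representative_sw_ge[OF assms(5) c(1)] c(2) m_ge by simp
  have "max_sw C n A k \<le> sw n A W + k * m"
    using max_sw_le_sw_add fin WC k(2) m_max by metis
  then have opt_le: "real (max_sw C n A k) \<le> real (sw n A W) + real k * real m"
    by (metis of_nat_add of_nat_mult of_nat_le_iff)
  have "0 < real t * real n / real k"
    using assms(2,3) k(1) by simp
  then have m_pos: "0 < real m"
    using m_ge by linarith
  moreover have "m \<le> max_sw C n A k"
    using c fin k by (metis DiffD1 supporters_le_max_sw)
  ultimately have "0 < real (max_sw C n A k)"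
    by linarith
  then show ?thesis
    unfolding util_ratio_eq using ratio_ge_min_half[OF m_pos _ _ _ sw_W opt_le] k(1) by simp
qed

end
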